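(* Let $\mathfrak m\in\mathcal O_{\mathbb Z}$ be a set (all multiplicities at most $1$). Then no non-trivial decomposition of $\mathfrak m$ is relevant to the canonical order on $\mathfrak m$. In particular, if $\mathfrak m$ is distinguished then $\mathfrak m$ is of Speh type.
   Context: Segments of integers: $[a,b]=\{a,\dots,b\}$ with integers $a\le b$; $b([a,b])=a$, $e([a,b])=b$, $\nu[a,b]=[a+1,b+1]$; $[a,b]\prec[a',b']$ if $a<a'$, $b<b'$, $b\ge a'-1$. $\mathcal O_{\mathbb Z}$: finite multi-sets of segments (functions to $\mathbb Z_{\ge0}$ with finite support; sums and pointwise minima are taken as functions; $\nu\mathfrak n$ applies $\nu$ to each segment). An ordering $\{\Delta_1,\dots,\Delta_k\}$ is standard if $\Delta_i\not\prec\Delta_j$ for $i<j$. A decomposition of $[a,b]$ is a tuple of nonempty segments $([a_1,b_1],\dots,[a_m,b_m])$ with $b_1=b$, $a_m=a$, $b_{i+1}=a_i-1$; it is trivial if $m=1$. A decomposition of an ordered multi-set $\{\Delta_1,\dots,\Delta_k\}$ is a choice of decomposition $(\Delta_{i,1},\dots,\Delta_{i,k_i})$ of each $\Delta_i$ (trivial if all are trivial); index set $\mathfrak I=\{(i,j)\}$ with lexicographic order $\prec$, and $(i,j)\ll(i',j')$ iff $i<i'$. It is relevant to the ordering if there is an involution $\tau$ of $\mathfrak I$ with: $\tau(i,j+1)\ll\tau(i,j)$ for all $i$, $1\le j<k_i$; $\tau(\iota)\ne\iota$ for all $\iota$; $\Delta_\iota=\nu\Delta_{\tau(\iota)}$ whenever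 $\iota\prec\tau(\iota)$. $\mathfrak m$ is distinguished if every standard ordering admits a relevant decomposition; of Speh type if $\mathfrak m=\mathfrak n+\nu\mathfrak n$ for some $\mathfrak n$. Canonical order: let $c_1>\cdots>c_s$ be the distinct values of $e(\Delta)$, $\Delta\in\mathfrak m$, and $\mathfrak m[i]$ the sub-multi-set of segments ending at $c_i$. List all of $\mathfrak m[1]$, then all of $\mathfrak m[2]$, etc. Order $\mathfrak m[1]$ by nondecreasing beginnings and set $\mathfrak m[1]'=\mathfrak m[1]$. Given $\mathfrak m[i]'$, let $\mathfrak p=\min(\mathfrak m[i+1],\nu^{-1}\mathfrak m[i]')$ and $\mathfrak m[i+1]'=\mathfrak m[i+1]-\mathfrak p$; order $\mathfrak m[i+1]$ as the segments of $\mathfrak m[i+1]'$ in nondecreasing order of beginnings followed by the segments of $\mathfrak p$ in nonincreasing order of beginnings. (This is a standard order.) *)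

theory Defs
  imports Main "HOL-Library.Multiset" "HOL-Library.Product_Lexorder"
begin

text \<open>A segment [a,b] is represented by the pair (a,b) with a \<le> b.\<close>
type_synonym seg = "int \<times> int"

definition is_seg :: "seg \<Rightarrow> bool" where
  "is_seg \<Delta> \<longleftrightarrow> fst \<Delta> \<le> snd \<Delta>"

definition nu :: "seg \<Rightarrow> seg" where
  "nu \<Delta> = (fst \<Delta> + 1, snd \<Delta> + 1)"

definition nu_inv :: "seg \<Rightarrow> seg" where
  "nu_inv \<Delta> = (fst \<Delta> - 1, snd \<Delta> - 1)"

definition seg_prec :: "seg \<Rightarrow> seg \<Rightarrow> bool" where
  "seg_prec \<Delta> \<Delta>' \<longleftrightarrow> fst \<Delta> < fst \<Delta>' \<and> snd \<Delta> < snd \<Delta>' \<and> snd \<Delta> \<ge> fst \<Delta>' - 1"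

definition is_segms :: "seg multiset \<Rightarrow> bool" where
  "is_segms m \<longleftrightarrow> (\<forall>\<Delta>\<in>#m. is_seg \<Delta>)"

definition standard_ordering :: "seg multiset \<Rightarrow> seg list \<Rightarrow> bool" where
  "standard_ordering m xs \<longleftrightarrow> mset xs = m \<and>
     (\<forall>i j. i < j \<and> j < length xs \<longrightarrow> \<not> seg_prec (xs ! i) (xs ! j))"

definition seg_decomp :: "seg \<Rightarrow> seg list \<Rightarrow> bool" where
  "seg_decomp \<Delta> ds \<longleftrightarrow> ds \<noteq> [] \<and> (\<forall>\<delta>\<in>set ds. is_seg \<delta>) \<and>
     snd (hd ds) = snd \<Delta> \<and> fst (last ds) = fst \<Delta> \<and>
     (\<forall>i. Suc i < length ds \<longrightarrow> snd (ds ! Suc i) = fst (ds ! i) - 1)"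

definition decomposition :: "seg list \<Rightarrow> seg list list \<Rightarrow> bool" where
  "decomposition xs dss \<longleftrightarrow> length dss = length xs \<and>
     (\<forall>i < length xs. seg_decomp (xs ! i) (dss ! i))"

definition trivial_decomp :: "seg list list \<Rightarrow> bool" where
  "trivial_decomp dss \<longleftrightarrow> (\<forall>i < length dss. length (dss ! i) = 1)"

text \<open>Index set (0-based) and lexicographic order on it.\<close>
definition index_set :: "seg list list \<Rightarrow> (nat \<times> nat) set" where
  "index_set dss = {(i, j). i < length dss \<and> j < length (dss ! i)}"

definition idx_lex :: "nat \<times> nat \<Rightarrow> nat \<times> nat \<Rightarrow> bool" where
  "idx_lex \<iota> \<iota>' \<longleftrightarrow> fst \<iota> < fst \<iota>' \<or> (fst \<iota> = fst \<iota>' \<and> snd \<iota> < snd \<iota>')"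

definition relevant :: "seg list \<Rightarrow> seg list list \<Rightarrow> bool" where
  "relevant xs dss \<longleftrightarrow> decomposition xs dss \<and>
    (\<exists>\<tau> :: nat \<times> nat \<Rightarrow> nat \<times> nat.
       (\<forall>\<iota>\<in>index_set dss. \<tau> \<iota> \<in> index_set dss \<and> \<tau> (\<tau> \<iota>) = \<iota> \<and> \<tau> \<iota> \<noteq> \<iota>) \<and>
       (\<forall>i j. i < length dss \<and> Suc j < length (dss ! i) \<longrightarrow>
            fst (\<tau> (i, Suc j)) < fst (\<tau> (i, j))) \<and>
       (\<forall>\<iota>\<in>index_set dss. idx_lex \<iota> (\<tau> \<iota>) \<longrightarrow>
            dss ! fst \<iota> ! snd \<iota> = nu (dss ! fst (\<tau> \<iota>) ! snd (\<tau> \<iota>))))"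

definition distinguished :: "seg multiset \<Rightarrow> bool" where
  "distinguished m \<longleftrightarrow> (\<forall>xs. standard_ordering m xs \<longrightarrow> (\<exists>dss. relevant xs dss))"

definition speh_type :: "seg multiset \<Rightarrow> bool" where
  "speh_type m \<longleftrightarrow> (\<exists>n. m = n + image_mset nu n)"

text \<open>Canonical order. prev is m[i]'; the list holds the remaining end values in decreasing order.
  All segments in mc have the same end, so the lexicographic order (Product_Lexorder) sorts them by beginnings.\<close>
fun canon_aux :: "seg multiset \<Rightarrow> int list \<Rightarrow> seg multiset \<Rightarrow> seg list" where
  "canon_aux prev [] m = []"
| "canon_aux prev (c # cs) m =
     (let mc = filter_mset (\<lambda>\<Delta>. snd \<Delta> = c) m;
          p = mc \<inter># image_mset nu_inv prev;
          mc' = mc - p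
      in sorted_list_of_multiset mc' @ rev (sorted_list_of_multiset p) @ canon_aux mc' cs m)"

definition canonical_order :: "seg multiset \<Rightarrow> seg list" where
  "canonical_order m = canon_aux {#} (rev (sorted_list_of_set (snd ` set_mset m))) m"

end

theory Submission
  imports Defs
begin

(*
  Let \<Delta>0 = [a,c] be the first segment of the canonical order: c is the largest end and
  a the smallest beginning among segments ending at c.  In a relevant decomposition every
  piece of the first row is matched by \<tau> with a piece one step to the left in a later row.
  The last piece of the first row begins at a, so its partner is the last piece of some row s,
  whose segment begins at a - 1.  As \<tau> decreases row indices along a row, the partner of the
  first piece (which ends at c - 1) lies in row s or later; since ends decrease along the
  canonical order and a is minimal, the segment of row s is [a-1,c-1].  When m is a set, the
  canonical order places [a-1,c-1] right before the segments ending below c - 1, which forces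
  both rows to consist of a single piece matched with each other.  Deleting them leaves a
  relevant decomposition of the canonical order of m - {[a,c],[a-1,c-1]}, and induction on
  the size of m shows that the decomposition is trivial and that m = n + \<nu> n.
*)

section \<open>The canonical order\<close>

abbreviation ends_at :: "seg multiset \<Rightarrow> int \<Rightarrow> seg multiset" where
  "ends_at m c \<equiv> filter_mset (\<lambda>\<Delta>. snd \<Delta> = c) m"

lemma canon_aux_Cons:
  "canon_aux prev (c # cs) m =
   sorted_list_of_multiset (ends_at m c - (ends_at m c \<inter># image_mset nu_inv prev)) @
   rev (sorted_list_of_multiset (ends_at m c \<inter># image_mset nu_inv prev)) @
   canon_aux (ends_at m c - (ends_at m c \<inter># image_mset nu_inv prev)) cs m"
  by (simp add: Let_def)

declare canon_aux.simps(2)[simp del]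

lemma set_canon_aux: "set (canon_aux prev cs m) \<subseteq> {\<Delta>. \<Delta> \<in># m \<and> snd \<Delta> \<in> set cs}"
  by (induction cs arbitrary: prev) (auto simp: canon_aux_Cons dest: in_diffD)

lemma mset_canon_aux:
  "distinct cs \<Longrightarrow> mset (canon_aux prev cs m) = filter_mset (\<lambda>\<Delta>. snd \<Delta> \<in> set cs) m"
proof (induction cs arbitrary: prev)
  case Nil
  then show ?case by simp
next
  case (Cons c cs)
  let ?p = "ends_at m c \<inter># image_mset nu_inv prev"
  have "mset (canon_aux prev (c # cs) m) =
      (ends_at m c - ?p) + ?p + filter_mset (\<lambda>\<Delta>. snd \<Delta> \<in> set cs) m"
    using Cons by (simp add: canon_aux_Cons)
  also have "(ends_at m c - ?p) + ?p = ends_at m c"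
    by (rule subset_mset.diff_add) simp
  also have "ends_at m c + filter_mset (\<lambda>\<Delta>. snd \<Delta> \<in> set cs) m =
      filter_mset (\<lambda>\<Delta>. snd \<Delta> \<in> set (c # cs)) m"
    using Cons.prems by (intro multiset_eqI) auto
  finally show ?case .
qed

lemma sorted_ends_canon_aux:
  "sorted_wrt (>) cs \<Longrightarrow> sorted_wrt (\<lambda>x y. snd y \<le> snd x) (canon_aux prev cs m)"
proof (induction cs arbitrary: prev)
  case Nil
  then show ?case by simp
next
  case (Cons c cs)
  let ?m' = "ends_at m c - (ends_at m c \<inter># image_mset nu_inv prev)"
  let ?block = "sorted_list_of_multiset ?m' @
    rev (sorted_list_of_multiset (ends_at m c \<inter># image_mset nu_inv prev))"
  have block: "\<forall>x\<in>set ?block. snd x = c"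
    by (auto dest: in_diffD)
  have "sorted_wrt (\<lambda>x y. snd y \<le> snd x) xs" if "\<forall>x\<in>set xs. snd x = c" for xs :: "seg list"
    using that by (induction xs) auto
  then have "sorted_wrt (\<lambda>x y. snd y \<le> snd x) ?block"
    using block by blast
  moreover have "\<forall>x\<in>set (canon_aux ?m' cs m). snd x < c"
    using set_canon_aux Cons.prems by fastforce
  moreover have "sorted_wrt (\<lambda>x y. snd y \<le> snd x) (canon_aux ?m' cs m)"
    using Cons by simp
  ultimately have "sorted_wrt (\<lambda>x y. snd y \<le> snd x) (?block @ canon_aux ?m' cs m)"
    using block unfolding sorted_wrt_append by fastforce
  then show ?case
    by (simp add: canon_aux_Cons)
qed

lemma canon_aux_cong:
  "(\<And>c. c \<in> set cs \<Longrightarrow> ends_at m c = ends_at m' c) \<Longrightarrow> canon_aux prev cs m = canon_aux prev cs m'"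
  by (induction cs arbitrary: prev) (simp_all add: canon_aux_Cons)

lemma canon_aux_empty_block:
  assumes "ends_at m c = {#}"
  shows "canon_aux prev (c # cs) m = canon_aux {#} cs m"
  unfolding canon_aux_Cons assms by simp

lemma canon_aux_prev_irrelevant:
  assumes "\<forall>\<Delta>\<in>#prev. \<forall>d\<in>set cs. snd \<Delta> \<noteq> d + 1"
  shows "canon_aux prev cs m = canon_aux {#} cs m"
proof (cases cs)
  case (Cons c cs')
  have "ends_at m c \<inter># image_mset nu_inv prev = {#}"
    using assms Cons by (auto simp: disjunct_not_in nu_inv_def)
  then show ?thesis
    using Cons by (simp add: canon_aux_Cons)
qed simp

lemma canon_aux_drop_empty_blocks:
  assumes "sorted_wrt (>) cs" and "\<forall>\<Delta>\<in>#prev. \<forall>d\<in>set cs. d < snd \<Delta>"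
  shows "canon_aux prev cs m = canon_aux prev (filter (\<lambda>d. ends_at m d \<noteq> {#}) cs) m"
  using assms
proof (induction cs arbitrary: prev)
  case Nil
  then show ?case by simp
next
  case (Cons d cs)
  let ?nonempty = "filter (\<lambda>d. ends_at m d \<noteq> {#}) cs"
  show ?case
  proof (cases "ends_at m d = {#}")
    case True
    have "canon_aux prev (d # cs) m = canon_aux {#} ?nonempty m"
      using Cons True by (simp add: canon_aux_empty_block)
    also have "\<dots> = canon_aux prev ?nonempty m"
      using Cons.prems by (intro canon_aux_prev_irrelevant[symmetric]) fastforce
    also have "?nonempty = filter (\<lambda>d. ends_at m d \<noteq> {#}) (d # cs)"
      using True by auto
    finally show ?thesis .
  next
    case False
    let ?m' = "ends_at m d - (ends_at m d \<inter># image_mset nu_inv prev)"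
    have "\<forall>\<Delta>\<in>#?m'. \<forall>d'\<in>set cs. d' < snd \<Delta>"
      using Cons.prems(1) by (auto dest: in_diffD)
    then have "canon_aux ?m' cs m = canon_aux ?m' ?nonempty m"
      using Cons by simp
    then show ?thesis
      using False by (simp add: canon_aux_Cons)
  qed
qed

lemma canonical_order_eq_canon_aux:
  assumes "sorted_wrt (>) cs" and "snd ` set_mset m \<subseteq> set cs"
  shows "canonical_order m = canon_aux {#} cs m"
proof -
  let ?nonempty = "filter (\<lambda>d. ends_at m d \<noteq> {#}) cs"
  have "sorted_wrt (<) (rev ?nonempty)"
    using assms(1) by (simp add: sorted_wrt_rev sorted_wrt_filter)
  moreover have "set (rev ?nonempty) = snd ` set_mset m"
    using assms(2) by (force simp: image_iff)
  ultimately have "rev ?nonempty = sorted_list_of_set (snd ` set_mset m)"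
    by (intro sorted_distinct_set_unique) (auto simp: strict_sorted_iff)
  then have "canonical_order m = canon_aux {#} ?nonempty m"
    unfolding canonical_order_def by (metis rev_rev_ident)
  also have "\<dots> = canon_aux {#} cs m"
    using canon_aux_drop_empty_blocks[OF assms(1), of "{#}" m] by simp
  finally show ?thesis .
qed

lemma mset_canonical_order: "mset (canonical_order m) = m"
proof -
  have "mset (canonical_order m) = filter_mset (\<lambda>\<Delta>. snd \<Delta> \<in> snd ` set_mset m) m"
    unfolding canonical_order_def by (simp add: mset_canon_aux)
  also have "\<dots> = m"
    by (rule multiset_eqI) (auto simp flip: count_eq_zero_iff)
  finally show ?thesis .
qed

lemma sorted_ends_canonical_order:
  "sorted_wrt (\<lambda>x y. snd y \<le> snd x) (canonical_order m)"
  unfolding canonical_order_def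
  by (rule sorted_ends_canon_aux) (simp add: sorted_wrt_rev strict_sorted_iff)

lemma standard_ordering_canonical_order: "standard_ordering m (canonical_order m)"
  using sorted_ends_canonical_order[of m]
  unfolding standard_ordering_def seg_prec_def sorted_wrt_iff_nth_less
  by (metis mset_canonical_order not_le)

lemma sorted_list_of_multiset_eq_Cons:
  assumes "x \<in># M" and "\<forall>y\<in>#M. x \<le> y"
  shows "sorted_list_of_multiset M = x # sorted_list_of_multiset (M - {#x#})"
proof -
  have "sorted_list_of_multiset M = insort x (sorted_list_of_multiset (M - {#x#}))"
    using assms(1) by (metis insert_DiffM sorted_list_of_multiset_insert)
  also have "\<dots> = x # sorted_list_of_multiset (M - {#x#})"
    using assms by (intro insort_is_Cons) (auto dest: in_diffD)
  finally show ?thesis .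
qed

lemma inter_image_mset_remove:
  assumes "x \<in># A" and "f x \<in># B"
  shows "(B - {#f x#}) \<inter># image_mset f (A - {#x#}) = (B \<inter># image_mset f A) - {#f x#}"
proof -
  have "image_mset f (A - {#x#}) = image_mset f A - {#f x#}"
    using assms(1) by (simp add: image_mset_Diff)
  moreover have "f x \<in># image_mset f A"
    using assms(1) by simp
  ultimately show ?thesis
    using assms(2) by (auto intro!: multiset_eqI simp flip: count_eq_zero_iff)
qed

lemma diff_remove_both:
  "x \<in># P \<Longrightarrow> P \<subseteq># M \<Longrightarrow> (M - {#x#}) - (P - {#x#}) = M - P"
  by (rule multiset_eqI) (auto simp: subseteq_mset_def simp flip: count_eq_zero_iff)

lemma nu_inv_mono: "\<Delta> \<le> \<Delta>' \<Longrightarrow> nu_inv \<Delta> \<le> nu_inv \<Delta>'"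
  by (cases \<Delta>; cases \<Delta>') (auto simp: nu_inv_def)

lemma canonical_order_top_blocks:
  assumes "\<forall>\<Delta>\<in>#m. snd \<Delta> \<le> c" and "sorted_wrt (>) T" and "\<forall>d\<in>set T. d < c - 1"
    and "\<forall>\<Delta>\<in>#m. snd \<Delta> < c - 1 \<longrightarrow> snd \<Delta> \<in> set T"
  defines "p \<equiv> ends_at m (c - 1) \<inter># image_mset nu_inv (ends_at m c)"
  shows "canonical_order m = sorted_list_of_multiset (ends_at m c) @
    sorted_list_of_multiset (ends_at m (c - 1) - p) @ rev (sorted_list_of_multiset p) @
    canon_aux (ends_at m (c - 1) - p) T m"
proof -
  have "snd ` set_mset m \<subseteq> set (c # (c - 1) # T)"
    using assms(1,4) by fastforce
  moreover have "sorted_wrt (>) (c # (c - 1) # T)"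
    using assms(2,3) by auto
  ultimately have "canonical_order m = canon_aux {#} (c # (c - 1) # T) m"
    by (rule canonical_order_eq_canon_aux[rotated])
  then show ?thesis
    unfolding p_def by (simp add: canon_aux_Cons)
qed

lemma hd_canonical_order_max_end:
  assumes "canonical_order m = \<Delta>0 # rest" and "\<Delta> \<in># m"
  shows "snd \<Delta> \<le> snd \<Delta>0"
proof -
  have "\<Delta> \<in> set (\<Delta>0 # rest)"
    using assms mset_canonical_order[of m] by (metis set_mset_mset)
  then show ?thesis
    using sorted_ends_canonical_order[of m] assms(1) by auto
qed

lemma decreasing_list_of_finite_set:
  "finite S \<Longrightarrow> \<exists>T. sorted_wrt (>) T \<and> set T = (S :: 'a :: linorder set)"
  by (intro exI[of _ "rev (sorted_list_of_set S)"]) (simp add: sorted_wrt_rev strict_sorted_iff)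

lemma hd_canonical_order_min:
  assumes "canonical_order m = \<Delta>0 # rest" and "\<Delta> \<in># m" and "snd \<Delta> = snd \<Delta>0"
  shows "\<Delta>0 \<le> \<Delta>"
proof -
  obtain T where T: "sorted_wrt (>) T" "set T = {d \<in> snd ` set_mset m. d < snd \<Delta>0 - 1}"
    using decreasing_list_of_finite_set[of "{d \<in> snd ` set_mset m. d < snd \<Delta>0 - 1}"] by auto
  let ?L = "sorted_list_of_multiset (ends_at m (snd \<Delta>0))"
  have "\<forall>\<Delta>\<in>#m. snd \<Delta> \<le> snd \<Delta>0"
    using hd_canonical_order_max_end[OF assms(1)] by blast
  from canonical_order_top_blocks[OF this T(1)]
  have "\<exists>R. canonical_order m = ?L @ R"
    using T(2) by simp
  moreover have mem: "\<Delta> \<in> set ?L"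
    using assms(2,3) by simp
  ultimately have L: "?L = \<Delta>0 # tl ?L"
    using assms(1) by (cases ?L) auto
  have "sorted (\<Delta>0 # tl ?L)"
    by (subst L[symmetric]) simp
  then show ?thesis
    using mem by (subst (asm) L) auto
qed

lemma canonical_order_remove_top_pair:
  assumes max: "\<forall>\<Delta>\<in>#m. snd \<Delta> \<le> c" and T: "sorted_wrt (>) T" "\<forall>d\<in>set T. d < c - 1"
    "\<forall>\<Delta>\<in>#m. snd \<Delta> < c - 1 \<longrightarrow> snd \<Delta> \<in> set T"
    and D0: "\<Delta>0 \<in># ends_at m c" and Ds: "nu_inv \<Delta>0 \<in># ends_at m (c - 1)"
  defines "p \<equiv> ends_at m (c - 1) \<inter># image_mset nu_inv (ends_at m c)"
  shows "canonical_order (m - {#\<Delta>0, nu_inv \<Delta>0#}) =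
    sorted_list_of_multiset (ends_at m c - {#\<Delta>0#}) @
    sorted_list_of_multiset (ends_at m (c - 1) - p) @
    rev (sorted_list_of_multiset (p - {#nu_inv \<Delta>0#})) @
    canon_aux (ends_at m (c - 1) - p) T m"
proof -
  define m' where "m' = m - {#\<Delta>0, nu_inv \<Delta>0#}"
  have sDs: "snd (nu_inv \<Delta>0) = c - 1" and sD0: "snd \<Delta>0 = c"
    using D0 by (auto simp: nu_inv_def)
  have M1': "ends_at m' c = ends_at m c - {#\<Delta>0#}"
    and M2': "ends_at m' (c - 1) = ends_at m (c - 1) - {#nu_inv \<Delta>0#}"
    using sDs sD0 by (auto simp: m'_def)
  have p': "ends_at m' (c - 1) \<inter># image_mset nu_inv (ends_at m' c) = p - {#nu_inv \<Delta>0#}"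
    unfolding M1' M2' p_def by (rule inter_image_mset_remove[where f = nu_inv, OF D0 Ds])
  have "nu_inv \<Delta>0 \<in># p"
    using D0 Ds unfolding p_def by simp
  then have diff': "ends_at m' (c - 1) - (p - {#nu_inv \<Delta>0#}) = ends_at m (c - 1) - p"
    unfolding M2' by (rule diff_remove_both) (simp add: p_def)
  have Tl': "canon_aux (ends_at m (c - 1) - p) T m' = canon_aux (ends_at m (c - 1) - p) T m"
    using T(2) sDs sD0 by (intro canon_aux_cong) (auto simp: m'_def)
  have "\<forall>\<Delta>\<in>#m'. snd \<Delta> \<le> c" and "\<forall>\<Delta>\<in>#m'. snd \<Delta> < c - 1 \<longrightarrow> snd \<Delta> \<in> set T"
    using max T(3) by (auto simp: m'_def dest: in_diffD)
  from canonical_order_top_blocks[OF this(1) T(1,2) this(2), unfolded p' diff' Tl', unfolded M1']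
  show ?thesis
    unfolding m'_def .
qed

lemma canonical_order_remove_pair:
  assumes co: "canonical_order m = \<Delta>0 # rest" and Ds_in: "nu_inv \<Delta>0 \<in># m"
  obtains A T where "canonical_order m = \<Delta>0 # A @ nu_inv \<Delta>0 # T"
    and "canonical_order (m - {#\<Delta>0, nu_inv \<Delta>0#}) = A @ T"
    and "\<forall>\<Delta>\<in>set T. snd \<Delta> < snd \<Delta>0 - 1"
proof -
  define c where "c = snd \<Delta>0"
  define Ds where "Ds = nu_inv \<Delta>0"
  define M1 where "M1 = ends_at m c"
  define M2 where "M2 = ends_at m (c - 1)"
  define p where "p = M2 \<inter># image_mset nu_inv M1"
  obtain T where T: "sorted_wrt (>) T" "set T = {d \<in> snd ` set_mset m. d < c - 1}"
    using decreasing_list_of_finite_set[of "{d \<in> snd ` set_mset m. d < c - 1}"] by auto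
  have D0_in: "\<Delta>0 \<in># m"
    using co mset_canonical_order[of m] by (metis list.set_intros(1) set_mset_mset)
  have max_m: "\<forall>\<Delta>\<in>#m. snd \<Delta> \<le> c"
    using hd_canonical_order_max_end[OF co] unfolding c_def by blast
  have sDs: "snd Ds = c - 1"
    by (simp add: Ds_def c_def nu_inv_def)
  have D0_M1: "\<Delta>0 \<in># M1" and Ds_M2: "Ds \<in># M2" and Ds_p: "Ds \<in># p"
    using D0_in Ds_in sDs by (auto simp: M1_def M2_def p_def Ds_def c_def)
  have min_M1: "\<forall>\<Delta>\<in>#M1. \<Delta>0 \<le> \<Delta>"
    using hd_canonical_order_min[OF co] by (simp add: M1_def c_def)
  have "\<forall>\<Delta>\<in>#p. Ds \<le> \<Delta>"
  proof
    fix \<Delta> assume "\<Delta> \<in># p"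
    then obtain \<Delta>' where "\<Delta>' \<in># M1" "\<Delta> = nu_inv \<Delta>'"
      unfolding p_def by auto
    then show "Ds \<le> \<Delta>"
      using min_M1 nu_inv_mono unfolding Ds_def by blast
  qed
  then have p_list: "sorted_list_of_multiset p = Ds # sorted_list_of_multiset (p - {#Ds#})"
    by (rule sorted_list_of_multiset_eq_Cons[OF Ds_p])
  have M1_list: "sorted_list_of_multiset M1 = \<Delta>0 # sorted_list_of_multiset (M1 - {#\<Delta>0#})"
    using min_M1 by (rule sorted_list_of_multiset_eq_Cons[OF D0_M1])
  define A where "A = sorted_list_of_multiset (M1 - {#\<Delta>0#}) @ sorted_list_of_multiset (M2 - p) @
    rev (sorted_list_of_multiset (p - {#Ds#}))"
  define Tl where "Tl = canon_aux (M2 - p) T m"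
  have "canonical_order m = sorted_list_of_multiset M1 @ sorted_list_of_multiset (M2 - p) @
      rev (sorted_list_of_multiset p) @ Tl"
    unfolding M1_def M2_def p_def Tl_def
    by (rule canonical_order_top_blocks[OF max_m T(1)]) (simp_all add: T(2))
  then have "canonical_order m = \<Delta>0 # A @ Ds # Tl"
    by (simp add: M1_list p_list A_def)
  moreover have "canonical_order (m - {#\<Delta>0, Ds#}) = A @ Tl"
    using canonical_order_remove_top_pair[OF max_m T(1) _ _ D0_M1[unfolded M1_def]] Ds_M2 T(2)
    unfolding A_def Tl_def Ds_def M1_def M2_def p_def by auto
  moreover have "\<forall>\<Delta>\<in>set Tl. snd \<Delta> < c - 1"
    using set_canon_aux[of "M2 - p" T m] T(2) unfolding Tl_def by auto
  ultimately show ?thesis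
    using that unfolding Ds_def c_def by blast
qed

section \<open>Relevant involutions\<close>

lemma seg_decomp_hd_end: "seg_decomp \<Delta> ds \<Longrightarrow> snd (ds ! 0) = snd \<Delta>"
  unfolding seg_decomp_def by (metis hd_conv_nth)

lemma seg_decomp_last_begin: "seg_decomp \<Delta> ds \<Longrightarrow> fst (ds ! (length ds - 1)) = fst \<Delta>"
  unfolding seg_decomp_def by (metis last_conv_nth)

lemma seg_decomp_end_less:
  assumes "seg_decomp \<Delta> ds"
  shows "0 < j \<Longrightarrow> j < length ds \<Longrightarrow> snd (ds ! j) < snd \<Delta>"
proof (induction j)
  case 0
  then show ?case by simp
next
  case (Suc j)
  have "snd (ds ! Suc j) = fst (ds ! j) - 1" and "is_seg (ds ! j)"
    using assms Suc.prems unfolding seg_decomp_def by auto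
  moreover have "snd (ds ! j) \<le> snd \<Delta>"
    using Suc seg_decomp_hd_end[OF assms] by (cases j) auto
  ultimately show ?case
    by (simp add: is_seg_def)
qed

lemma seg_decomp_end_le: "seg_decomp \<Delta> ds \<Longrightarrow> j < length ds \<Longrightarrow> snd (ds ! j) \<le> snd \<Delta>"
  using seg_decomp_end_less[of \<Delta> ds j] seg_decomp_hd_end[of \<Delta> ds] by (cases j) auto

definition relevant_involution :: "seg list list \<Rightarrow> (nat \<times> nat \<Rightarrow> nat \<times> nat) \<Rightarrow> bool" where
  "relevant_involution dss \<tau> \<longleftrightarrow>
     (\<forall>\<iota>\<in>index_set dss. \<tau> \<iota> \<in> index_set dss \<and> \<tau> (\<tau> \<iota>) = \<iota> \<and> \<tau> \<iota> \<noteq> \<iota>) \<and>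
     (\<forall>i j. i < length dss \<and> Suc j < length (dss ! i) \<longrightarrow> fst (\<tau> (i, Suc j)) < fst (\<tau> (i, j))) \<and>
     (\<forall>\<iota>\<in>index_set dss. idx_lex \<iota> (\<tau> \<iota>) \<longrightarrow>
        dss ! fst \<iota> ! snd \<iota> = nu (dss ! fst (\<tau> \<iota>) ! snd (\<tau> \<iota>)))"

lemma relevant_iff_involution:
  "relevant xs dss \<longleftrightarrow> decomposition xs dss \<and> (\<exists>\<tau>. relevant_involution dss \<tau>)"
  unfolding relevant_def relevant_involution_def ..

lemma involution_row_decreasing:
  assumes "relevant_involution dss \<tau>" and "i < length dss" and "j' < length (dss ! i)" and "j < j'"
  shows "fst (\<tau> (i, j')) < fst (\<tau> (i, j))"
  using assms(3,4)
proof (induction j')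
  case (Suc j')
  have "fst (\<tau> (i, Suc j')) < fst (\<tau> (i, j'))"
    using assms(1,2) Suc.prems(1) unfolding relevant_involution_def by blast
  then show ?case
    using Suc by (cases "j = j'") auto
qed simp

lemma involution_other_row:
  assumes inv: "relevant_involution dss \<tau>" and ij: "(i, j) \<in> index_set dss"
  shows "fst (\<tau> (i, j)) \<noteq> i"
proof
  assume "fst (\<tau> (i, j)) = i"
  then obtain j' where tj: "\<tau> (i, j) = (i, j')"
    by (metis prod.collapse)
  have "(i, j') \<in> index_set dss" "\<tau> (i, j') = (i, j)" "j' \<noteq> j"
    using inv ij tj unfolding relevant_involution_def by (metis, metis, force)
  moreover have "i < length dss" "j < length (dss ! i)" "j' < length (dss ! i)"
    using ij \<open>(i, j') \<in> index_set dss\<close> unfolding index_set_def by auto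
  ultimately show False
    using involution_row_decreasing[OF inv, of i] tj by (metis fst_conv linorder_neq_iff less_irrefl)
qed

lemma relevant_involution_restrict:
  assumes inv: "relevant_involution dss \<tau>" and g: "strict_mono g"
    and rows: "\<forall>i<n. g i < length dss" and inverse: "\<forall>i<n. h (g i) = i"
    and closed: "\<forall>i<n. \<forall>j<length (dss ! g i). fst (\<tau> (g i, j)) \<in> g ` {..<n}"
  shows "relevant_involution (map (\<lambda>i. dss ! g i) [0..<n])
    (\<lambda>(i, j). (h (fst (\<tau> (g i, j))), snd (\<tau> (g i, j))))"
    (is "relevant_involution ?dss ?\<tau>")
proof -
  have idx: "(i, j) \<in> index_set ?dss \<longleftrightarrow> i < n \<and> (g i, j) \<in> index_set dss" for i j
    using rows by (auto simp: index_set_def)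
  have partner: "\<exists>i' j'. \<tau> (g i, j) = (g i', j') \<and> ?\<tau> (i, j) = (i', j') \<and>
      (i', j') \<in> index_set ?dss \<and> ?\<tau> (i', j') = (i, j) \<and> (i', j') \<noteq> (i, j)"
    if "(i, j) \<in> index_set ?dss" for i j
  proof -
    have ij: "i < n" "(g i, j) \<in> index_set dss"
      using that idx by auto
    then have "j < length (dss ! g i)"
      by (simp add: index_set_def)
    with closed ij(1) obtain i' where i': "i' < n" "fst (\<tau> (g i, j)) = g i'"
      by blast
    define j' where "j' = snd (\<tau> (g i, j))"
    have \<tau>ij: "\<tau> (g i, j) = (g i', j')"
      using i'(2) unfolding j'_def by (metis prod.collapse)
    have "(g i', j') \<in> index_set dss" "\<tau> (g i', j') = (g i, j)" "(g i', j') \<noteq> (g i, j)"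
      using inv ij(2) \<tau>ij unfolding relevant_involution_def by metis+
    then show ?thesis
      using \<tau>ij i'(1) ij(1) inverse idx by (intro exI[of _ i'] exI[of _ j']) auto
  qed
  show ?thesis
    unfolding relevant_involution_def
  proof (intro conjI ballI allI impI)
    fix \<iota> assume "\<iota> \<in> index_set ?dss"
    then obtain i j where "\<iota> = (i, j)" "(i, j) \<in> index_set ?dss"
      by (metis prod.collapse)
    then show "?\<tau> \<iota> \<in> index_set ?dss" "?\<tau> (?\<tau> \<iota>) = \<iota>" "?\<tau> \<iota> \<noteq> \<iota>"
      using partner[of i j] by auto
  next
    fix i j assume "i < length ?dss \<and> Suc j < length (?dss ! i)"
    then have "(i, j) \<in> index_set ?dss" "(i, Suc j) \<in> index_set ?dss"
      and lt: "fst (\<tau> (g i, Suc j)) < fst (\<tau> (g i, j))"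
      using inv rows unfolding relevant_involution_def index_set_def by auto
    then obtain a b where "\<tau> (g i, Suc j) = (g a, snd (\<tau> (g i, Suc j)))" "fst (?\<tau> (i, Suc j)) = a"
      and "\<tau> (g i, j) = (g b, snd (\<tau> (g i, j)))" "fst (?\<tau> (i, j)) = b"
      using partner[of i j] partner[of i "Suc j"] by fastforce
    then show "fst (?\<tau> (i, Suc j)) < fst (?\<tau> (i, j))"
      using lt strict_mono_less[OF g] by (metis fst_conv)
  next
    fix \<iota> assume "\<iota> \<in> index_set ?dss" and lex: "idx_lex \<iota> (?\<tau> \<iota>)"
    then obtain i j where ij: "\<iota> = (i, j)" "(i, j) \<in> index_set ?dss"
      by (metis prod.collapse)
    then obtain i' j' where \<tau>ij: "\<tau> (g i, j) = (g i', j')" "?\<tau> (i, j) = (i', j')"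
      and "(i', j') \<in> index_set ?dss"
      using partner by blast
    have "idx_lex (i, j) (i', j')"
      using lex ij(1) \<tau>ij(2) by simp
    then have "idx_lex (g i, j) (g i', j')"
      by (auto simp: idx_lex_def strict_mono_less[OF g])
    then have "dss ! g i ! j = nu (dss ! g i' ! j')"
      using inv ij(2) idx \<tau>ij(1) unfolding relevant_involution_def by (metis fst_conv snd_conv)
    then show "?dss ! fst \<iota> ! snd \<iota> = nu (?dss ! fst (?\<tau> \<iota>) ! snd (?\<tau> \<iota>))"
      using ij \<tau>ij(2) \<open>(i', j') \<in> index_set ?dss\<close> idx by simp
  qed
qed

lemma involution_avoids_matched_rows:
  assumes inv: "relevant_involution dss \<tau>" and "s < length dss"
    and len: "length (dss ! 0) = 1" "length (dss ! s) = 1" and match: "\<tau> (0, 0) = (s, 0)"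
    and ij: "(i, j) \<in> index_set dss" "i \<noteq> 0" "i \<noteq> s"
  shows "fst (\<tau> (i, j)) \<noteq> 0 \<and> fst (\<tau> (i, j)) \<noteq> s"
proof -
  have "(0, 0) \<in> index_set dss"
    using assms(2) len(1) by (cases dss) (auto simp: index_set_def)
  then have match': "\<tau> (s, 0) = (0, 0)"
    using inv match unfolding relevant_involution_def by metis
  obtain r j' where \<tau>ij: "\<tau> (i, j) = (r, j')"
    by (metis prod.collapse)
  have "(r, j') \<in> index_set dss" "\<tau> (r, j') = (i, j)"
    using inv ij(1) \<tau>ij unfolding relevant_involution_def by metis+
  then have "r = 0 \<Longrightarrow> (i, j) = (s, 0)" and "r = s \<Longrightarrow> (i, j) = (0, 0)"
    using len match match' by (auto simp: index_set_def)
  then show ?thesis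
    using \<tau>ij ij(2,3) by auto
qed

lemma relevant_remove_matched_pair:
  assumes dec: "decomposition (x0 # A @ x1 # T) dss" and inv: "relevant_involution dss \<tau>"
    and len: "length (dss ! 0) = 1" "length (dss ! Suc (length A)) = 1"
    and match: "\<tau> (0, 0) = (Suc (length A), 0)"
  obtains dss' where "relevant (A @ T) dss'" and "trivial_decomp dss' \<Longrightarrow> trivial_decomp dss"
proof -
  define k where "k = length A"
  define n where "n = length A + length T"
  define g where "g i = (if i < k then Suc i else i + 2)" for i
  define h where "h r = (if r \<le> k then r - 1 else r - 2)" for r
  define dss' where "dss' = map (\<lambda>i. dss ! g i) [0..<n]"
  have len_dss: "length dss = n + 2"
    using dec by (simp add: decomposition_def n_def)
  have g_mono: "strict_mono g"
    by (auto simp: strict_mono_def g_def)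
  have rows: "\<forall>i<n. g i < length dss" and inverse: "\<forall>i<n. h (g i) = i"
    using len_dss by (auto simp: g_def h_def)
  have other_rows: "r \<in> g ` {..<n}" if "r < length dss" "r \<noteq> 0" "r \<noteq> Suc k" for r
    using that len_dss by (intro image_eqI[of _ g "h r"]) (auto simp: g_def h_def k_def n_def)
  have "\<forall>i<n. \<forall>j<length (dss ! g i). fst (\<tau> (g i, j)) \<in> g ` {..<n}"
  proof (intro allI impI)
    fix i j assume "i < n" "j < length (dss ! g i)"
    then have ij: "(g i, j) \<in> index_set dss" "g i \<noteq> 0" "g i \<noteq> Suc k"
      using rows by (auto simp: index_set_def g_def)
    then have "\<tau> (g i, j) \<in> index_set dss"
      using inv unfolding relevant_involution_def by blast
    then have "fst (\<tau> (g i, j)) < length dss"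
      by (auto simp: index_set_def split: prod.splits)
    moreover have "fst (\<tau> (g i, j)) \<noteq> 0 \<and> fst (\<tau> (g i, j)) \<noteq> Suc k"
      using involution_avoids_matched_rows[OF inv _ len[folded k_def] match[folded k_def] ij] len_dss
      unfolding k_def n_def by simp
    ultimately show "fst (\<tau> (g i, j)) \<in> g ` {..<n}"
      using other_rows by blast
  qed
  then have "relevant_involution dss' (\<lambda>(i, j). (h (fst (\<tau> (g i, j))), snd (\<tau> (g i, j))))"
    unfolding dss'_def by (rule relevant_involution_restrict[OF inv g_mono rows inverse])
  moreover have "decomposition (A @ T) dss'"
  proof -
    have "(x0 # A @ x1 # T) ! g i = (A @ T) ! i" for i
      by (simp add: g_def k_def nth_append)
    then show ?thesis
      using dec rows unfolding decomposition_def dss'_def by (auto simp: n_def)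
  qed
  moreover have "trivial_decomp dss" if "trivial_decomp dss'"
    unfolding trivial_decomp_def
  proof (intro allI impI)
    fix r assume "r < length dss"
    then show "length (dss ! r) = 1"
      using len other_rows[of r] that unfolding trivial_decomp_def dss'_def k_def by auto
  qed
  ultimately show ?thesis
    using that relevant_iff_involution by blast
qed

lemma involution_first_row:
  assumes inv: "relevant_involution dss \<tau>" and "dss \<noteq> []" and "j < length (dss ! 0)"
  shows "0 < fst (\<tau> (0, j))" and "\<tau> (0, j) \<in> index_set dss"
    and "dss ! 0 ! j = nu (dss ! fst (\<tau> (0, j)) ! snd (\<tau> (0, j)))"
proof -
  have idx: "(0, j) \<in> index_set dss"
    using assms(2,3) by (simp add: index_set_def)
  show pos: "0 < fst (\<tau> (0, j))"
    using involution_other_row[OF inv idx] by simp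
  show "\<tau> (0, j) \<in> index_set dss"
    using inv idx unfolding relevant_involution_def by blast
  have "idx_lex (0, j) (\<tau> (0, j))"
    using pos by (simp add: idx_lex_def)
  then show "dss ! 0 ! j = nu (dss ! fst (\<tau> (0, j)) ! snd (\<tau> (0, j)))"
    using inv idx unfolding relevant_involution_def by fastforce
qed

lemma involution_last_piece_partner:
  assumes dec: "decomposition xs dss" and inv: "relevant_involution dss \<tau>" and "xs \<noteq> []"
  obtains s where "\<tau> (0, length (dss ! 0) - 1) = (s, length (dss ! s) - 1)"
    and "0 < s" and "s < length xs" and "fst (xs ! s) = fst (xs ! 0) - 1"
proof -
  define j where "j = length (dss ! 0) - 1"
  have ne: "dss \<noteq> []" and sd: "\<And>i. i < length xs \<Longrightarrow> seg_decomp (xs ! i) (dss ! i)"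
    using dec assms(3) by (auto simp: decomposition_def)
  then have j: "j < length (dss ! 0)"
    using assms(3) unfolding j_def seg_decomp_def by (metis diff_less length_greater_0_conv less_one sd)
  obtain s js where \<tau>j: "\<tau> (0, j) = (s, js)"
    by (metis prod.collapse)
  have s: "0 < s" "s < length xs" "js < length (dss ! s)" "dss ! 0 ! j = nu (dss ! s ! js)"
    using involution_first_row[OF inv ne j] \<tau>j dec by (auto simp: index_set_def decomposition_def)
  have "\<tau> (s, js) = (0, j)"
    using inv \<tau>j involution_first_row(2)[OF inv ne j] ne j
    unfolding relevant_involution_def index_set_def
    by (metis (no_types, lifting) case_prodI length_greater_0_conv mem_Collect_eq)
  \<comment> \<open>a later piece of row s would be matched with a row before row 0\<close>
  then have js: "js = length (dss ! s) - 1"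
    using inv s(2,3) dec unfolding relevant_involution_def decomposition_def
    by (metis Suc_lessI diff_Suc_1 fst_conv not_less0)
  have "fst (xs ! s) = fst (dss ! s ! js)"
    using seg_decomp_last_begin[OF sd[OF s(2)]] js by simp
  also have "\<dots> = fst (dss ! 0 ! j) - 1"
    using s(4) by (simp add: nu_def)
  also have "\<dots> = fst (xs ! 0) - 1"
    using seg_decomp_last_begin[OF sd[of 0]] assms(3) unfolding j_def by simp
  finally show ?thesis
    using that \<tau>j s(1,2) js unfolding j_def by blast
qed

section \<open>Relevant decompositions of the canonical order of a set\<close>

lemma canonical_order_partner_row:
  assumes co: "canonical_order m = \<Delta>0 # rest" and dec: "decomposition (canonical_order m) dss"
    and inv: "relevant_involution dss \<tau>"
  obtains s where "\<tau> (0, length (dss ! 0) - 1) = (s, length (dss ! s) - 1)"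
    and "0 < s" and "s \<le> fst (\<tau> (0, 0))" and "s < length (canonical_order m)"
    and "canonical_order m ! s = nu_inv \<Delta>0" and "\<tau> (0, 0) \<in> index_set dss"
    and "snd (dss ! fst (\<tau> (0, 0)) ! snd (\<tau> (0, 0))) = snd \<Delta>0 - 1"
proof -
  let ?xs = "canonical_order m"
  have ne: "?xs \<noteq> []" "dss \<noteq> []" and len: "length dss = length ?xs"
    using co dec by (auto simp: decomposition_def)
  have sd: "\<And>i. i < length ?xs \<Longrightarrow> seg_decomp (?xs ! i) (dss ! i)"
    using dec by (simp add: decomposition_def)
  have row0: "0 < length (dss ! 0)"
    using sd[of 0] ne(1) by (simp add: seg_decomp_def)
  obtain s where \<tau>last: "\<tau> (0, length (dss ! 0) - 1) = (s, length (dss ! s) - 1)"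
    and s: "0 < s" "s < length ?xs" and fst_s: "fst (?xs ! s) = fst \<Delta>0 - 1"
    using involution_last_piece_partner[OF dec inv ne(1)] co by auto
  obtain r jr where \<tau>00: "\<tau> (0, 0) = (r, jr)"
    by (metis prod.collapse)
  have \<tau>0: "\<tau> (0, 0) \<in> index_set dss" and "dss ! 0 ! 0 = nu (dss ! r ! jr)"
    using involution_first_row[OF inv ne(2) row0] \<tau>00 by auto
  moreover have "snd (dss ! 0 ! 0) = snd \<Delta>0"
    using seg_decomp_hd_end[OF sd[of 0]] ne(1) co by simp
  ultimately have first_partner: "snd (dss ! r ! jr) = snd \<Delta>0 - 1"
    by (simp add: nu_def)
  have r: "r < length ?xs" "jr < length (dss ! r)"
    using \<tau>0 \<tau>00 len by (auto simp: index_set_def)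
  have "s \<le> r"
    using involution_row_decreasing[OF inv, of 0 "length (dss ! 0) - 1" 0] \<tau>last \<tau>00 row0 ne(2)
    by (cases "length (dss ! 0) = 1") auto
  have "snd \<Delta>0 - 1 \<le> snd (?xs ! r)"
    using seg_decomp_end_le[OF sd[OF r(1)] r(2)] first_partner by simp
  also have "snd (?xs ! r) \<le> snd (?xs ! s)"
    using sorted_ends_canonical_order[of m] \<open>s \<le> r\<close> r(1)
    by (cases "s = r") (auto simp: sorted_wrt_iff_nth_less)
  finally have "snd \<Delta>0 - 1 \<le> snd (?xs ! s)" .
  moreover have s_in: "?xs ! s \<in># m"
    using s(2) mset_canonical_order[of m] by (metis nth_mem set_mset_mset)
  moreover have "snd (?xs ! s) \<noteq> snd \<Delta>0"
    using hd_canonical_order_min[OF co s_in] fst_s by (cases \<Delta>0; cases "?xs ! s") auto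
  moreover have "snd (?xs ! s) \<le> snd \<Delta>0"
    using hd_canonical_order_max_end[OF co s_in] .
  ultimately have "snd (?xs ! s) = snd \<Delta>0 - 1"
    by linarith
  then have "?xs ! s = nu_inv \<Delta>0"
    using fst_s by (simp add: nu_inv_def prod_eq_iff)
  then show ?thesis
    using that \<tau>last s \<open>s \<le> r\<close> \<tau>0 \<tau>00 first_partner by simp
qed

lemma distinct_if_count_le_1:
  assumes "\<forall>x. count (mset xs) x \<le> 1"
  shows "distinct xs"
  unfolding distinct_count_atmost_1
proof
  fix x
  show "count (mset xs) x = (if x \<in> set xs then 1 else 0)"
    using assms count_mset_0_iff[of xs x] by (cases "x \<in> set xs") (auto simp: le_Suc_eq)
qed

lemma canonical_order_partner_row_of_set:
  assumes set: "\<forall>\<Delta>. count m \<Delta> \<le> 1" and co: "canonical_order m = \<Delta>0 # rest"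
    and dec: "decomposition (canonical_order m) dss" and inv: "relevant_involution dss \<tau>"
  obtains A T where "nu_inv \<Delta>0 \<in># m" and "canonical_order m = \<Delta>0 # A @ nu_inv \<Delta>0 # T"
    and "canonical_order (m - {#\<Delta>0, nu_inv \<Delta>0#}) = A @ T"
    and "\<tau> (0, length (dss ! 0) - 1) = (Suc (length A), length (dss ! Suc (length A)) - 1)"
    and "fst (\<tau> (0, 0)) = Suc (length A)" and "\<tau> (0, 0) \<in> index_set dss"
    and "snd (dss ! fst (\<tau> (0, 0)) ! snd (\<tau> (0, 0))) = snd \<Delta>0 - 1"
proof -
  let ?xs = "canonical_order m"
  obtain s where \<tau>last: "\<tau> (0, length (dss ! 0) - 1) = (s, length (dss ! s) - 1)"
    and s: "0 < s" "s \<le> fst (\<tau> (0, 0))" "s < length ?xs" and xs_s: "?xs ! s = nu_inv \<Delta>0"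
    and \<tau>0: "\<tau> (0, 0) \<in> index_set dss"
    and first_partner: "snd (dss ! fst (\<tau> (0, 0)) ! snd (\<tau> (0, 0))) = snd \<Delta>0 - 1"
    by (rule canonical_order_partner_row[OF co dec inv])
  have Ds_in: "nu_inv \<Delta>0 \<in># m"
    using s(3) xs_s mset_canonical_order[of m] by (metis nth_mem set_mset_mset)
  obtain A T where xs: "?xs = \<Delta>0 # A @ nu_inv \<Delta>0 # T"
    and co': "canonical_order (m - {#\<Delta>0, nu_inv \<Delta>0#}) = A @ T"
    and T: "\<forall>\<Delta>\<in>set T. snd \<Delta> < snd \<Delta>0 - 1"
    by (rule canonical_order_remove_pair[OF co Ds_in])
  have "distinct ?xs"
    using set mset_canonical_order[of m] by (intro distinct_if_count_le_1) simp
  moreover have "?xs ! Suc (length A) = nu_inv \<Delta>0" and "Suc (length A) < length ?xs"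
    unfolding xs by (simp_all add: nth_append)
  ultimately have s_eq: "s = Suc (length A)"
    using xs_s s(3) nth_eq_iff_index_eq by metis
  define r where "r = fst (\<tau> (0, 0))"
  have r: "r < length ?xs" "snd (\<tau> (0, 0)) < length (dss ! r)"
    using dec \<tau>0 unfolding r_def by (auto simp: decomposition_def index_set_def split: prod.splits)
  have "snd \<Delta>0 - 1 \<le> snd (?xs ! r)"
    using seg_decomp_end_le[of "?xs ! r" "dss ! r", OF _ r(2)] dec r(1) first_partner
    unfolding r_def by (simp add: decomposition_def)
  have "r = s"
  proof (rule ccontr)
    assume "r \<noteq> s"
    then have "Suc (length A) < r"
      using s(2) s_eq unfolding r_def by simp
    define q where "q = r - Suc (Suc (length A))"
    have r_q: "r = Suc (length A + Suc q)"
      using \<open>Suc (length A) < r\<close> unfolding q_def by simp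
    have "?xs ! r = T ! q" and "q < length T"
      using r(1) unfolding xs r_q by (simp_all add: nth_append)
    then have "?xs ! r \<in> set T"
      by simp
    then show False
      using T \<open>snd \<Delta>0 - 1 \<le> snd (?xs ! r)\<close> by fastforce
  qed
  show ?thesis
    by (rule that[OF Ds_in xs co']) (use \<tau>last s_eq \<tau>0 first_partner \<open>r = s\<close> r_def in simp_all)
qed

lemma relevant_canonical_order_first_pair:
  assumes set: "\<forall>\<Delta>. count m \<Delta> \<le> 1" and co: "canonical_order m = \<Delta>0 # rest"
    and dec: "decomposition (canonical_order m) dss" and inv: "relevant_involution dss \<tau>"
  obtains A T where "nu_inv \<Delta>0 \<in># m" and "canonical_order m = \<Delta>0 # A @ nu_inv \<Delta>0 # T"
    and "canonical_order (m - {#\<Delta>0, nu_inv \<Delta>0#}) = A @ T"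
    and "length (dss ! 0) = 1" and "length (dss ! Suc (length A)) = 1"
    and "\<tau> (0, 0) = (Suc (length A), 0)"
proof -
  let ?xs = "canonical_order m"
  obtain A T where Ds_in: "nu_inv \<Delta>0 \<in># m" and xs: "?xs = \<Delta>0 # A @ nu_inv \<Delta>0 # T"
    and co': "canonical_order (m - {#\<Delta>0, nu_inv \<Delta>0#}) = A @ T"
    and \<tau>last: "\<tau> (0, length (dss ! 0) - 1) = (Suc (length A), length (dss ! Suc (length A)) - 1)"
    and r: "fst (\<tau> (0, 0)) = Suc (length A)" and \<tau>0: "\<tau> (0, 0) \<in> index_set dss"
    and first_partner: "snd (dss ! fst (\<tau> (0, 0)) ! snd (\<tau> (0, 0))) = snd \<Delta>0 - 1"
    by (rule canonical_order_partner_row_of_set[OF set co dec inv])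
  define s where "s = Suc (length A)"
  obtain jr where \<tau>00: "\<tau> (0, 0) = (s, jr)"
    using r unfolding s_def by (metis prod.collapse)
  have sd: "\<And>i. i < length ?xs \<Longrightarrow> seg_decomp (?xs ! i) (dss ! i)"
    and s: "s < length ?xs" "jr < length (dss ! s)"
    using dec \<tau>0 \<tau>00 by (auto simp: decomposition_def index_set_def)
  have ne: "dss \<noteq> []" "dss ! 0 \<noteq> []"
    using sd[of 0] dec xs by (auto simp: decomposition_def seg_decomp_def)
  have len0: "length (dss ! 0) = 1"
  proof (rule ccontr)
    assume "length (dss ! 0) \<noteq> 1"
    then have "fst (\<tau> (0, length (dss ! 0) - 1)) < fst (\<tau> (0, 0))"
      using ne by (intro involution_row_decreasing[OF inv]) (auto simp: nat_neq_iff Suc_lessI)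
    then show False
      using \<tau>last \<tau>00 unfolding s_def by simp
  qed
  then have jr: "jr = length (dss ! s) - 1"
    using \<tau>last \<tau>00 unfolding s_def by simp
  have "jr = 0"
  proof (rule ccontr)
    assume "jr \<noteq> 0"
    then have "snd (dss ! s ! jr) < snd (?xs ! s)"
      using seg_decomp_end_less[OF sd[OF s(1)]] s(2) by simp
    moreover have "?xs ! s = nu_inv \<Delta>0"
      unfolding xs s_def by (simp add: nth_append)
    ultimately show False
      using first_partner \<tau>00 by (simp add: nu_inv_def)
  qed
  then have "length (dss ! s) = 1"
    using jr s(2) by (cases "dss ! s") auto
  then show ?thesis
    using that Ds_in xs co' len0 \<tau>00 \<open>jr = 0\<close> unfolding s_def by blast
qed

lemma relevant_canonical_order_of_set:
  assumes "\<forall>\<Delta>. count m \<Delta> \<le> 1" and "relevant (canonical_order m) dss"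
  shows "trivial_decomp dss \<and> speh_type m"
  using assms
proof (induction "size m" arbitrary: m dss rule: less_induct)
  case less
  show ?case
  proof (cases "canonical_order m")
    case Nil
    then have "m = {#}" and "dss = []"
      using less.prems(2) mset_canonical_order[of m] by (auto simp: relevant_def decomposition_def)
    then show ?thesis
      by (auto simp: trivial_decomp_def speh_type_def)
  next
    case (Cons \<Delta>0 rest)
    obtain \<tau> where dec: "decomposition (canonical_order m) dss" and inv: "relevant_involution dss \<tau>"
      using less.prems(2) relevant_iff_involution by blast
    obtain A T where Ds_in: "nu_inv \<Delta>0 \<in># m" and xs: "canonical_order m = \<Delta>0 # A @ nu_inv \<Delta>0 # T"
      and co': "canonical_order (m - {#\<Delta>0, nu_inv \<Delta>0#}) = A @ T"
      and len: "length (dss ! 0) = 1" "length (dss ! Suc (length A)) = 1"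
      and match: "\<tau> (0, 0) = (Suc (length A), 0)"
      by (rule relevant_canonical_order_first_pair[OF less.prems(1) Cons dec inv])
    obtain dss' where rel': "relevant (A @ T) dss'" and triv: "trivial_decomp dss' \<Longrightarrow> trivial_decomp dss"
      using relevant_remove_matched_pair[OF dec[unfolded xs] inv len match] by blast
    have "\<Delta>0 \<in># m"
      using Cons mset_canonical_order[of m] by (metis list.set_intros(1) set_mset_mset)
    moreover have "\<Delta>0 \<noteq> nu_inv \<Delta>0"
      by (simp add: nu_inv_def prod_eq_iff)
    ultimately have pair: "{#\<Delta>0, nu_inv \<Delta>0#} \<subseteq># m"
      using Ds_in by (simp add: insert_subset_eq_iff in_diff_count)
    then have "size (m - {#\<Delta>0, nu_inv \<Delta>0#}) < size m"
      using size_mset_mono[OF pair] by (simp add: size_Diff_submset)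
    moreover have "\<forall>\<Delta>. count (m - {#\<Delta>0, nu_inv \<Delta>0#}) \<Delta> \<le> 1"
    proof
      fix \<Delta>
      have "count (m - {#\<Delta>0, nu_inv \<Delta>0#}) \<Delta> \<le> count m \<Delta>"
        by simp
      then show "count (m - {#\<Delta>0, nu_inv \<Delta>0#}) \<Delta> \<le> 1"
        using less.prems(1) le_trans by blast
    qed
    ultimately have "trivial_decomp dss' \<and> speh_type (m - {#\<Delta>0, nu_inv \<Delta>0#})"
      using less.hyps rel' co' by simp
    then obtain n where n: "m - {#\<Delta>0, nu_inv \<Delta>0#} = n + image_mset nu n" and "trivial_decomp dss"
      using triv unfolding speh_type_def by blast
    have "m = add_mset (nu_inv \<Delta>0) n + image_mset nu (add_mset (nu_inv \<Delta>0) n)"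
      using subset_mset.diff_add[OF pair] unfolding n by (simp add: nu_def nu_inv_def)
    then show ?thesis
      using \<open>trivial_decomp dss\<close> unfolding speh_type_def by blast
  qed
qed

theorem mainTheorem10:
  fixes m :: "seg multiset"
  assumes "is_segms m"
    and "\<forall>\<Delta>. count m \<Delta> \<le> 1"
  shows "(\<forall>dss. decomposition (canonical_order m) dss \<and> \<not> trivial_decomp dss
            \<longrightarrow> \<not> relevant (canonical_order m) dss)
         \<and> (distinguished m \<longrightarrow> speh_type m)"
  using relevant_canonical_order_of_set[OF assms(2)] standard_ordering_canonical_order[of m]
  unfolding distinguished_def by blast

end
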